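(* Let $A$ be a binary ($\{0,1\}$-valued) $n\times m$ matrix, let $R$ be either the binary rank $R_{binary}$ or the boolean rank $R_{bool}$, and let $k=R(A)$. Bases and spanning below are taken in the binary sense if $R=R_{binary}$ and in the boolean sense if $R=R_{bool}$. (1) If $A$ has a base that spans all other bases of $A$, then for every set of binary column vectors $x_1,\dots,x_t$ of length $n$ with $R(A|x_i)=k$ for all $1\le i\le t$, it also holds that $R(A|x_1,\dots,x_t)=k$. (2) If there is no base of $A$ that spans all other bases of $A$, then there exist binary column vectors $x_1,\dots,x_t$ of length $n$ such that $R(A|x_i)=k$ for all $1\le i\le t$, but $R(A|x_1,\dots,x_t)>k$. In particular, $A$ has the Augmentation property for $R$ if and only if $A$ has a base that spans all other bases of $A$.
   Context: Binary rank: for a binary $n\times m$ matrix $A$, $R_{binary}(A)$ is the least $k$ such that $A=UV$ with $U\in\{0,1\}^{n\times k}$, $V\in\{0,1\}^{k\times m}$, the product computed with ordinary real arithmetic. Boolean rank $R_{bool}(A)$: the same, except that the product is computed in the Boolean semiring ($1+1=1$, i.e. entrywise OR of ANDs). A set $X$ of $\{0,1\}$-vectors spans a vector $y$ in the binary sense if $y=\sum_{x\in X}c_x x$ for some coefficients $c_x\in\{0,1\}$ with ordinary addition, and in the boolean sense if the same holds with boolean addition ($1+1=1$). $X$ spans a set $Y$ if it spans every vector of $Y$. A base of $A$ (binary, resp. boolean) is a set of $\{0,1\}$ column vectors of length $n$ that spans all columns of $A$ and is a minimal spanning set, i.e. has minimum cardinality among such spanning sets. $(A|x_1,\dots,x_t)$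 denotes $A$ augmented with the columns $x_1,\dots,x_t$ appended on the right. A matrix $A$ has the Augmentation property for a rank function $R$ if for every collection of column vectors $x_1,\dots,x_t$ with $R(A|x_i)=R(A)$ for all $i$, also $R(A|x_1,\dots,x_t)=R(A)$. *)

theory Defs
  imports Main
begin

text \<open>A binary column vector of length n is a bool list of length n (True = 1).
An n x m binary matrix is represented as the list of its m columns, each of length n.\<close>

datatype rank_mode = Binary | Boolean

definition vecs :: "nat \<Rightarrow> bool list set" where
  "vecs n = {v. length v = n}"

definition is_matrix :: "nat \<Rightarrow> bool list list \<Rightarrow> bool" where
  "is_matrix n A \<longleftrightarrow> (\<forall>c\<in>set A. length c = n)"

definition factors :: "rank_mode \<Rightarrow> nat \<Rightarrow> bool list list \<Rightarrow> nat \<Rightarrow> bool" where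
  "factors R n A k \<longleftrightarrow> (\<exists>(U::nat \<Rightarrow> nat \<Rightarrow> bool) (V::nat \<Rightarrow> nat \<Rightarrow> bool).
     \<forall>i<n. \<forall>j<length A.
       (case R of
          Binary \<Rightarrow> (of_bool (A ! j ! i) :: nat) = (\<Sum>l<k. of_bool (U i l) * of_bool (V l j))
        | Boolean \<Rightarrow> (A ! j ! i) = (\<exists>l<k. U i l \<and> V l j)))"

definition rank :: "rank_mode \<Rightarrow> nat \<Rightarrow> bool list list \<Rightarrow> nat" where
  "rank R n A = (LEAST k. factors R n A k)"

definition spans_vec :: "rank_mode \<Rightarrow> bool list set \<Rightarrow> bool list \<Rightarrow> bool" where
  "spans_vec R X y \<longleftrightarrow> (\<exists>S\<subseteq>X. \<forall>i<length y.
     (case R of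
        Binary \<Rightarrow> (of_bool (y ! i) :: nat) = (\<Sum>x\<in>S. of_bool (x ! i))
      | Boolean \<Rightarrow> (y ! i) = (\<exists>x\<in>S. x ! i)))"

definition spans :: "rank_mode \<Rightarrow> bool list set \<Rightarrow> bool list set \<Rightarrow> bool" where
  "spans R X Y \<longleftrightarrow> (\<forall>y\<in>Y. spans_vec R X y)"

definition is_base :: "rank_mode \<Rightarrow> nat \<Rightarrow> bool list list \<Rightarrow> bool list set \<Rightarrow> bool" where
  "is_base R n A B \<longleftrightarrow> B \<subseteq> vecs n \<and> spans R B (set A) \<and>
     (\<forall>B'. B' \<subseteq> vecs n \<and> spans R B' (set A) \<longrightarrow> card B \<le> card B')"

definition augmentation_prop :: "rank_mode \<Rightarrow> nat \<Rightarrow> bool list list \<Rightarrow> bool" where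
  "augmentation_prop R n A \<longleftrightarrow> (\<forall>xs. set xs \<subseteq> vecs n \<longrightarrow>
     (\<forall>x\<in>set xs. rank R n (A @ [x]) = rank R n A) \<longrightarrow> rank R n (A @ xs) = rank R n A)"

end

theory Submission
  imports Defs
begin

text \<open>Both parts rest on one observation: the rank does not grow when columns are appended
exactly if some base of A spans the new columns. If one base spans all bases, every column x
with rank(A|x) = rank A is spanned by some base and hence, by transitivity of spanning, by the
universal base. Otherwise appending the union of all bases keeps each single augmentation at
rank A, but a base of A spanning this union would span all bases.\<close>

definition is_combination :: "rank_mode \<Rightarrow> bool list set \<Rightarrow> bool list \<Rightarrow> bool" where
  "is_combination R S y \<longleftrightarrow> (\<forall>i<length y.
     (case R of
        Binary \<Rightarrow> (of_bool (y ! i) :: nat) = (\<Sum>x\<in>S. of_bool (x ! i))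
      | Boolean \<Rightarrow> (y ! i) = (\<exists>x\<in>S. x ! i)))"

lemma spans_vec_iff: "spans_vec R X y \<longleftrightarrow> (\<exists>S\<subseteq>X. is_combination R S y)"
  by (simp add: spans_vec_def is_combination_def)

lemma is_combination_Binary:
  "is_combination Binary S y \<longleftrightarrow> (\<forall>i<length y. (of_bool (y ! i) :: nat) = (\<Sum>x\<in>S. of_bool (x ! i)))"
  by (simp add: is_combination_def)

lemma is_combination_Boolean:
  "is_combination Boolean S y \<longleftrightarrow> (\<forall>i<length y. (y ! i) = (\<exists>x\<in>S. x ! i))"
  by (simp add: is_combination_def)

lemma finite_vecs: "finite (vecs n)"
proof -
  have "vecs n = {xs. set xs \<subseteq> UNIV \<and> length xs = n}" by (auto simp: vecs_def)
  then show ?thesis using finite_lists_length_eq[of "UNIV :: bool set" n] by simp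
qed

lemma finite_subset_vecs: "X \<subseteq> vecs n \<Longrightarrow> finite X"
  using finite_subset finite_vecs by blast

lemma spans_refl: "spans R X X"
  unfolding spans_def spans_vec_iff
  by (auto intro!: exI[of _ "{_}"] simp: is_combination_def split: rank_mode.split)

lemma spans_subset: "Y \<subseteq> X \<Longrightarrow> spans R X Y"
  using spans_refl[of R X] by (auto simp: spans_def)

lemma spans_append: "spans R B (set (M @ N)) \<longleftrightarrow> spans R B (set M) \<and> spans R B (set N)"
  by (auto simp: spans_def)

lemma sum_image_eq_if_sum_le_one:
  fixes f :: "'b \<Rightarrow> nat"
  assumes fin: "finite L" and le_one: "(\<Sum>l\<in>L. f (h l)) \<le> 1"
  shows "(\<Sum>x\<in>h ` L. f x) = (\<Sum>l\<in>L. f (h l))"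
proof -
  have le: "(\<Sum>x\<in>h ` L. f x) \<le> (\<Sum>l\<in>L. f (h l))"
    using sum_image_le[of L f h] fin by (simp add: comp_def)
  show ?thesis
  proof (cases "(\<Sum>l\<in>L. f (h l)) = 0")
    case True
    with le show ?thesis by simp
  next
    case False
    then obtain l where l: "l \<in> L" "f (h l) \<noteq> 0" by (metis sum.neutral)
    then have "f (h l) \<le> (\<Sum>x\<in>h ` L. f x)" by (intro member_le_sum) (auto simp: fin)
    with False le_one le l(2) show ?thesis by linarith
  qed
qed

lemma spans_vec_trans:
  assumes X: "X \<subseteq> vecs n" and Y: "Y \<subseteq> vecs n" and XY: "spans R X Y"
    and Yz: "spans_vec R Y z" and z: "length z = n"
  shows "spans_vec R X z"
proof -
  obtain S where S: "S \<subseteq> Y" "is_combination R S z"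
    using Yz by (auto simp: spans_vec_iff)
  obtain T where T: "\<And>y. y \<in> Y \<Longrightarrow> T y \<subseteq> X \<and> is_combination R (T y) y"
    using XY unfolding spans_def spans_vec_iff by metis
  let ?P = "Sigma S T"
  have finS: "finite S"
    using S(1) Y finite_subset_vecs by blast
  have finT: "\<forall>y\<in>S. finite (T y)"
    using S(1) T X finite_subset_vecs by (meson subset_iff subset_trans)
  have len: "\<And>y. y \<in> S \<Longrightarrow> length y = n"
    using S(1) Y by (auto simp: vecs_def)
  have "is_combination R (snd ` ?P) z"
  proof (cases R)
    case Binary
    show ?thesis unfolding Binary is_combination_Binary
    proof (intro allI impI)
      fix i assume i: "i < length z"
      have "(of_bool (z ! i) :: nat) = (\<Sum>y\<in>S. of_bool (y ! i))"
        using S(2) i by (simp add: Binary is_combination_Binary)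
      also have "\<dots> = (\<Sum>y\<in>S. \<Sum>x\<in>T y. of_bool (x ! i))"
      proof (rule sum.cong[OF refl])
        fix y assume "y \<in> S"
        then have "y \<in> Y" "i < length y" using S(1) len i z by auto
        then show "(of_bool (y ! i) :: nat) = (\<Sum>x\<in>T y. of_bool (x ! i))"
          using T Binary by (simp add: is_combination_Binary)
      qed
      also have "\<dots> = (\<Sum>p\<in>?P. of_bool (snd p ! i))"
        using sum.Sigma[OF finS finT] by (simp add: case_prod_beta)
      finally have eq: "(of_bool (z ! i) :: nat) = (\<Sum>p\<in>?P. of_bool (snd p ! i))" .
      \<comment> \<open>the double sum is a 0/1 value, so no vector of X is counted twice\<close>
      then have "(\<Sum>p\<in>?P. (of_bool (snd p ! i) :: nat)) \<le> 1" by (cases "z ! i") auto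
      then show "(of_bool (z ! i) :: nat) = (\<Sum>x\<in>snd ` ?P. of_bool (x ! i))"
        using eq sum_image_eq_if_sum_le_one[of ?P "\<lambda>x. of_bool (x ! i)" snd] finS finT by simp
    qed
  next
    case Boolean
    show ?thesis unfolding Boolean is_combination_Boolean
    proof (intro allI impI)
      fix i assume i: "i < length z"
      have "z ! i = (\<exists>y\<in>S. y ! i)"
        using S(2) i by (simp add: Boolean is_combination_Boolean)
      also have "\<dots> = (\<exists>y\<in>S. \<exists>x\<in>T y. x ! i)"
      proof (rule bex_cong[OF refl])
        fix y assume "y \<in> S"
        then have "y \<in> Y" "i < length y" using S(1) len i z by auto
        then show "y ! i = (\<exists>x\<in>T y. x ! i)"
          using T Boolean by (simp add: is_combination_Boolean)
      qed
      finally show "z ! i = (\<exists>x\<in>snd ` ?P. x ! i)" by force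
    qed
  qed
  moreover have "snd ` ?P \<subseteq> X" using S(1) T by fastforce
  ultimately show ?thesis by (auto simp: spans_vec_iff)
qed

lemma spans_trans:
  assumes X: "X \<subseteq> vecs n" and Y: "Y \<subseteq> vecs n" and XY: "spans R X Y"
    and YZ: "spans R Y Z" and Z: "Z \<subseteq> vecs n"
  shows "spans R X Z"
  unfolding spans_def
proof
  fix z assume "z \<in> Z"
  then show "spans_vec R X z"
    using spans_vec_trans[OF X Y XY] YZ Z by (auto simp: spans_def vecs_def)
qed

lemma factors_of_spanning_set:
  assumes M: "is_matrix n M" and B: "B \<subseteq> vecs n" and card: "card B \<le> k"
    and sp: "spans R B (set M)"
  shows "factors R n M k"
proof -
  have finB: "finite B" using B finite_subset_vecs by blast
  obtain h where h: "bij_betw h {0..<card B} B" using ex_bij_betw_nat_finite[OF finB] by blast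
  obtain Sf where Sf: "\<And>y. y \<in> set M \<Longrightarrow> Sf y \<subseteq> B \<and> is_combination R (Sf y) y"
    using sp unfolding spans_def spans_vec_iff by metis
  define U where "U i l \<longleftrightarrow> l < card B \<and> h l ! i" for i l
  define V where "V l j \<longleftrightarrow> l < card B \<and> h l \<in> Sf (M ! j)" for l j
  show ?thesis unfolding factors_def
  proof (rule exI[of _ U], rule exI[of _ V], intro allI impI)
    fix i j assume i: "i < n" and j: "j < length M"
    let ?y = "M ! j"
    have y: "?y \<in> set M" using j by simp
    have i': "i < length ?y" using M y i by (auto simp: is_matrix_def)
    have SB: "Sf ?y \<subseteq> B" using Sf y by blast
    show "case R of Binary \<Rightarrow> (of_bool (M ! j ! i) :: nat) = (\<Sum>l<k. of_bool (U i l) * of_bool (V l j))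
        | Boolean \<Rightarrow> (M ! j ! i) = (\<exists>l<k. U i l \<and> V l j)"
    proof (cases R)
      case Binary
      let ?g = "\<lambda>x. if x \<in> Sf ?y then (of_bool (x ! i) :: nat) else 0"
      have "(of_bool (?y ! i) :: nat) = (\<Sum>x\<in>Sf ?y. of_bool (x ! i))"
        using Sf[OF y] i' Binary by (simp add: is_combination_Binary)
      also have "\<dots> = (\<Sum>x\<in>B. ?g x)"
        using SB finB by (simp add: sum.If_cases Int_absorb1)
      also have "\<dots> = (\<Sum>l\<in>{0..<card B}. ?g (h l))"
        using sum.reindex_bij_betw[OF h, of ?g] by simp
      also have "\<dots> = (\<Sum>l<k. of_bool (U i l) * of_bool (V l j))"
        by (rule sum.mono_neutral_cong_left) (use card in \<open>auto simp: U_def V_def\<close>)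
      finally show ?thesis using Binary by simp
    next
      case Boolean
      have "?y ! i = (\<exists>x\<in>Sf ?y. x ! i)"
        using Sf[OF y] i' Boolean by (simp add: is_combination_Boolean)
      also have "\<dots> = (\<exists>l<k. U i l \<and> V l j)"
      proof
        assume "\<exists>x\<in>Sf ?y. x ! i"
        then obtain x where x: "x \<in> Sf ?y" "x ! i" by blast
        have "B = h ` {0..<card B}" using h by (simp add: bij_betw_def)
        then have "x \<in> h ` {0..<card B}" using x(1) SB by blast
        then obtain l where "l < card B" "h l = x" by auto
        then show "\<exists>l<k. U i l \<and> V l j"
          using x card by (auto simp: U_def V_def intro!: exI[of _ l])
      qed (auto simp: U_def V_def)
      finally show ?thesis using Boolean by simp
    qed
  qed
qed

lemma spanning_set_of_factors:
  assumes M: "is_matrix n M" and f: "factors R n M k"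
  shows "\<exists>B. B \<subseteq> vecs n \<and> card B \<le> k \<and> spans R B (set M)"
proof -
  obtain U V where UV: "\<forall>i<n. \<forall>j<length M.
       (case R of
          Binary \<Rightarrow> (of_bool (M ! j ! i) :: nat) = (\<Sum>l<k. of_bool (U i l) * of_bool (V l j))
        | Boolean \<Rightarrow> (M ! j ! i) = (\<exists>l<k. U i l \<and> V l j))"
    using f unfolding factors_def by blast
  define col where "col l = map (\<lambda>i. U i l) [0..<n]" for l
  have col_nth: "\<And>l i. i < n \<Longrightarrow> col l ! i = U i l" by (simp add: col_def)
  have "spans R (col ` {..<k}) (set M)"
    unfolding spans_def spans_vec_iff
  proof
    fix y assume "y \<in> set M"
    then obtain j where j: "j < length M" and yj: "y = M ! j" by (metis in_set_conv_nth)
    have len: "length y = n" using M \<open>y \<in> set M\<close> by (auto simp: is_matrix_def)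
    let ?L = "{l\<in>{..<k}. V l j}"
    have "is_combination R (col ` ?L) y"
    proof (cases R)
      case Binary
      show ?thesis unfolding Binary is_combination_Binary
      proof (intro allI impI)
        fix i assume "i < length y"
        then have i: "i < n" using len by simp
        have "(of_bool (y ! i) :: nat) = (\<Sum>l<k. of_bool (U i l) * of_bool (V l j))"
          using UV[rule_format, OF i j] Binary yj by simp
        also have "\<dots> = (\<Sum>l\<in>?L. of_bool (col l ! i))"
          by (rule sum.mono_neutral_cong_right) (auto simp: col_nth[OF i])
        finally have eq: "(of_bool (y ! i) :: nat) = (\<Sum>l\<in>?L. of_bool (col l ! i))" .
        then have "(\<Sum>l\<in>?L. (of_bool (col l ! i) :: nat)) \<le> 1" by (cases "y ! i") auto
        then show "(of_bool (y ! i) :: nat) = (\<Sum>x\<in>col ` ?L. of_bool (x ! i))"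
          using eq sum_image_eq_if_sum_le_one[of ?L "\<lambda>x. of_bool (x ! i)" col] by simp
      qed
    next
      case Boolean
      show ?thesis unfolding Boolean is_combination_Boolean
      proof (intro allI impI)
        fix i assume "i < length y"
        then have i: "i < n" using len by simp
        have "y ! i = (\<exists>l<k. U i l \<and> V l j)"
          using UV[rule_format, OF i j] Boolean yj by simp
        then show "y ! i = (\<exists>x\<in>col ` ?L. x ! i)" by (auto simp: col_nth[OF i])
      qed
    qed
    moreover have "col ` ?L \<subseteq> col ` {..<k}" by blast
    ultimately show "\<exists>S\<subseteq>col ` {..<k}. is_combination R S y" by blast
  qed
  moreover have "col ` {..<k} \<subseteq> vecs n" by (auto simp: vecs_def col_def)
  moreover have "card (col ` {..<k}) \<le> k" using card_image_le[of "{..<k}" col] by simp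
  ultimately show ?thesis by blast
qed

lemma factors_iff_spanning_set:
  "is_matrix n M \<Longrightarrow> factors R n M k \<longleftrightarrow> (\<exists>B. B \<subseteq> vecs n \<and> card B \<le> k \<and> spans R B (set M))"
  using factors_of_spanning_set spanning_set_of_factors by metis

lemma rank_le_card:
  assumes "is_matrix n M" "B \<subseteq> vecs n" "spans R B (set M)"
  shows "rank R n M \<le> card B"
  unfolding rank_def using assms factors_iff_spanning_set by (intro Least_le) blast

lemma rank_spanning_set_exists:
  assumes M: "is_matrix n M"
  obtains B where "B \<subseteq> vecs n" "spans R B (set M)" "card B = rank R n M"
proof -
  have "set M \<subseteq> vecs n" using M by (auto simp: is_matrix_def vecs_def)
  then have "factors R n M (card (set M))"
    using factors_iff_spanning_set[OF M] spans_refl by blast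
  then have "factors R n M (rank R n M)" unfolding rank_def by (rule LeastI)
  then obtain B where "B \<subseteq> vecs n" "card B \<le> rank R n M" "spans R B (set M)"
    using factors_iff_spanning_set[OF M] by blast
  with rank_le_card[OF M] show ?thesis by (intro that) (auto intro: le_antisym)
qed

lemma is_base_iff:
  assumes M: "is_matrix n M"
  shows "is_base R n M B \<longleftrightarrow> B \<subseteq> vecs n \<and> spans R B (set M) \<and> card B = rank R n M"
proof -
  obtain B0 where "B0 \<subseteq> vecs n" "spans R B0 (set M)" "card B0 = rank R n M"
    using rank_spanning_set_exists[OF M] .
  then show ?thesis
    unfolding is_base_def using rank_le_card[OF M] by (metis le_antisym)
qed

lemma is_base_subset_vecs: "is_base R n A B \<Longrightarrow> B \<subseteq> vecs n"
  by (simp add: is_base_def)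

lemma rank_append_mono:
  assumes "is_matrix n (M @ N)"
  shows "rank R n M \<le> rank R n (M @ N)"
proof -
  obtain C where "C \<subseteq> vecs n" "spans R C (set (M @ N))" "card C = rank R n (M @ N)"
    using rank_spanning_set_exists[OF assms] .
  moreover have "is_matrix n M" using assms by (simp add: is_matrix_def)
  ultimately show ?thesis using rank_le_card spans_append by metis
qed

lemma rank_append_eq_iff_base_spans:
  assumes A: "is_matrix n A" and xs: "set xs \<subseteq> vecs n"
  shows "rank R n (A @ xs) = rank R n A \<longleftrightarrow> (\<exists>B. is_base R n A B \<and> spans R B (set xs))"
proof -
  have Axs: "is_matrix n (A @ xs)" using A xs by (auto simp: is_matrix_def vecs_def)
  show ?thesis
  proof
    assume eq: "rank R n (A @ xs) = rank R n A"
    obtain C where C: "C \<subseteq> vecs n" "spans R C (set (A @ xs))" "card C = rank R n (A @ xs)"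
      using rank_spanning_set_exists[OF Axs] .
    then have "is_base R n A C" using eq is_base_iff[OF A] spans_append by metis
    then show "\<exists>B. is_base R n A B \<and> spans R B (set xs)" using C(2) spans_append by blast
  next
    assume "\<exists>B. is_base R n A B \<and> spans R B (set xs)"
    then obtain B where "B \<subseteq> vecs n" "spans R B (set (A @ xs))" "card B = rank R n A"
      using is_base_iff[OF A] spans_append by metis
    then have "rank R n (A @ xs) \<le> rank R n A" using rank_le_card[OF Axs] by metis
    then show "rank R n (A @ xs) = rank R n A" using rank_append_mono[OF Axs, of R] by simp
  qed
qed

lemma rank_append_eq_if_universal_base:
  assumes A: "is_matrix n A" and B: "is_base R n A B"
    and universal: "\<forall>B'. is_base R n A B' \<longrightarrow> spans R B B'"
    and xs: "set xs \<subseteq> vecs n" and single: "\<forall>x\<in>set xs. rank R n (A @ [x]) = rank R n A"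
  shows "rank R n (A @ xs) = rank R n A"
proof -
  have "spans R B {x}" if x: "x \<in> set xs" for x
  proof -
    have x_vec: "set [x] \<subseteq> vecs n" using x xs by auto
    obtain C where C: "is_base R n A C" "spans R C {x}"
      using single x rank_append_eq_iff_base_spans[OF A x_vec] by auto
    have "spans R B C" using universal C(1) by blast
    moreover have "B \<subseteq> vecs n" "C \<subseteq> vecs n" using B C(1) by (auto dest: is_base_subset_vecs)
    ultimately show ?thesis using spans_trans[of B n C R "{x}"] C(2) x_vec by simp
  qed
  then have "spans R B (set xs)" by (auto simp: spans_def)
  then show ?thesis using rank_append_eq_iff_base_spans[OF A xs] B by blast
qed

lemma augmentation_raising_rank_if_no_universal_base:
  assumes A: "is_matrix n A"
    and no_universal: "\<nexists>B. is_base R n A B \<and> (\<forall>B'. is_base R n A B' \<longrightarrow> spans R B B')"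
  shows "\<exists>xs. set xs \<subseteq> vecs n \<and> (\<forall>x\<in>set xs. rank R n (A @ [x]) = rank R n A)
           \<and> rank R n A < rank R n (A @ xs)"
proof -
  let ?V = "\<Union>{B. is_base R n A B}"
  have V: "?V \<subseteq> vecs n" using is_base_subset_vecs by blast
  then have "finite ?V" by (rule finite_subset_vecs)
  then obtain xs where xs: "set xs = ?V" using finite_list by metis
  have single: "rank R n (A @ [x]) = rank R n A" if x: "x \<in> set xs" for x
  proof -
    obtain B where B: "is_base R n A B" "x \<in> B" using x unfolding xs by blast
    have x_vec: "set [x] \<subseteq> vecs n" using x V unfolding xs by auto
    have "spans R B (set [x])" using spans_subset B(2) by simp
    then show ?thesis using rank_append_eq_iff_base_spans[OF A x_vec] B(1) by blast
  qed
  have xs_vec: "set xs \<subseteq> vecs n" using V xs by simp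
  have "rank R n (A @ xs) \<noteq> rank R n A"
  proof
    assume "rank R n (A @ xs) = rank R n A"
    then obtain C where C: "is_base R n A C" "spans R C (set xs)"
      using rank_append_eq_iff_base_spans[OF A xs_vec] by blast
    have "\<forall>B'. is_base R n A B' \<longrightarrow> spans R C B'"
      using C(2) unfolding xs spans_def by blast
    then show False using C(1) no_universal by blast
  qed
  moreover have "rank R n A \<le> rank R n (A @ xs)"
    using A xs_vec by (intro rank_append_mono) (auto simp: is_matrix_def vecs_def)
  ultimately have "rank R n A < rank R n (A @ xs)" by simp
  with xs_vec single show ?thesis by blast
qed

theorem theorem1:
  fixes R :: rank_mode and n :: nat and A :: "bool list list"
  assumes "is_matrix n A"
  defines "k \<equiv> rank R n A"
  shows "((\<exists>B. is_base R n A B \<and> (\<forall>B'. is_base R n A B' \<longrightarrow> spans R B B')) \<longrightarrow>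
            (\<forall>xs. set xs \<subseteq> vecs n \<and> (\<forall>x\<in>set xs. rank R n (A @ [x]) = k)
                  \<longrightarrow> rank R n (A @ xs) = k))
       \<and> ((\<not> (\<exists>B. is_base R n A B \<and> (\<forall>B'. is_base R n A B' \<longrightarrow> spans R B B'))) \<longrightarrow>
            (\<exists>xs. set xs \<subseteq> vecs n \<and> (\<forall>x\<in>set xs. rank R n (A @ [x]) = k)
                  \<and> rank R n (A @ xs) > k))
       \<and> (augmentation_prop R n A \<longleftrightarrow>
            (\<exists>B. is_base R n A B \<and> (\<forall>B'. is_base R n A B' \<longrightarrow> spans R B B')))"
proof -
  let ?universal = "\<exists>B. is_base R n A B \<and> (\<forall>B'. is_base R n A B' \<longrightarrow> spans R B B')"
  have part1: "?universal \<longrightarrow> (\<forall>xs. set xs \<subseteq> vecs n \<and> (\<forall>x\<in>set xs. rank R n (A @ [x]) = k)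
                  \<longrightarrow> rank R n (A @ xs) = k)"
    using rank_append_eq_if_universal_base[OF assms(1)] unfolding k_def by blast
  have part2: "\<not> ?universal \<longrightarrow> (\<exists>xs. set xs \<subseteq> vecs n \<and> (\<forall>x\<in>set xs. rank R n (A @ [x]) = k)
                  \<and> rank R n (A @ xs) > k)"
    using augmentation_raising_rank_if_no_universal_base[OF assms(1)] unfolding k_def by blast
  have "augmentation_prop R n A \<longleftrightarrow> ?universal"
  proof
    assume "augmentation_prop R n A"
    then show ?universal
      using part2 unfolding augmentation_prop_def k_def by (metis less_irrefl)
  next
    assume ?universal
    then show "augmentation_prop R n A"
      using part1 unfolding augmentation_prop_def k_def by blast
  qed
  with part1 part2 show ?thesis by blast
qed

end
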